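(* Let $n\ge1$, let $K$ be a simplicial complex on $[m]$, and let $c=c_1\times\dots\times c_m$ be a cell of $\mathcal{Z}_K(D^n,S^{n-1})$ with all $c_i\in\{-,+,\bullet\}$, such that $c(+)\ne-\infty$ and $c_i=+$ holds if and only if $i=c(+)$. Let $I=\{c(+)\}\cup\mathrm{supp}(c)$. Then $c\in\mathrm{Crit}(K)$ if and only if $c_I\in\mathrm{Crit}(K_I)$ and $K_I=2^I\setminus\{I\}$.
   Context: Give $D^n$ the regular CW structure with cells $e_-^i,e_+^i$ ($0\le i\le n-1$; $e_\pm^i$ the two open hemispheres of $S^i\subseteq S^{n-1}$, with closure of $e_\pm^{i}$ equal to $e_\pm^i\cup\bigcup_{j<i}(e_-^j\cup e_+^j)$) and top cell $e_\bullet^n$; products of disks get the product cell structure. Write $-,+,\bullet$ for $e_-^0,e_+^{n-1},e_\bullet^n$. A simplicial complex $L$ on a finite totally ordered ground set $V=\{v_1<\dots<v_k\}$ (identified with $[k]$ via $v_j\mapsto j$) is a family of subsets of $V$ closed under subsets. $\mathrm{supp}(c)=\{i:c_i=\bullet\}$; $\mathcal{Z}_L(D^n,S^{n-1})$ is the subcomplex of $(D^n)^k$ of cells $c$ with $\mathrm{supp}(c)\in L$; $G_L$ is the directed graph on these cells with edges $c\to c'$ when $c'$ lies in the closure of $c$ and $\dim c'=\dim c-1$. Let $\mathcal{M}$ consist of $e_-^{i+1}\to e_+^i$ ($0\le i\le n-2$) and $e_\bullet^n\to e_+^{n-1}$. Put $\mathcal{M}_1=\{c\to c'\in G_L:c_1\to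 c_1'\in\mathcal{M}\}$ and for $1\le j\le k-1$, $\mathcal{M}_{j+1}=\{c\to c'\in G_L:$ neither $c$ nor $c'$ lies in an edge of $\mathcal{M}_1\cup\dots\cup\mathcal{M}_j$, and $c_{j+1}\to c'_{j+1}\in\mathcal{M}\}$; $\mathcal{M}_L=\bigcup_j\mathcal{M}_j$. $\mathrm{Crit}(L)$ is the set of cells lying in no edge of $\mathcal{M}_L$. For $I\subseteq[m]$, $K_I=\{\sigma\in K:\sigma\subseteq I\}$ is regarded as a complex on the ordered ground set $I$, and $c_I$ is the product of the $c_i$, $i\in I$, in increasing order of $i$. $2^I$ is the set of all subsets of $I$. $c(+)=\min\{i:c_i=+\}$, or $-\infty$ if no coordinate is $+$. *)

theory Defs
  imports Main
begin

text \<open>Cells of the regular CW structure on D^n: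
  DMinus i = e_-^i, DPlus i = e_+^i (0 <= i <= n-1), DBul = e_bullet^n.\<close>
datatype dcell = DMinus nat | DPlus nat | DBul

definition dcell_ok :: "nat \<Rightarrow> dcell \<Rightarrow> bool" where
  "dcell_ok n x = (case x of DMinus i \<Rightarrow> i < n | DPlus i \<Rightarrow> i < n | DBul \<Rightarrow> True)"

definition ddim :: "nat \<Rightarrow> dcell \<Rightarrow> nat" where
  "ddim n x = (case x of DMinus i \<Rightarrow> i | DPlus i \<Rightarrow> i | DBul \<Rightarrow> n)"

definition dface :: "nat \<Rightarrow> dcell \<Rightarrow> dcell \<Rightarrow> bool" where
  "dface n x y = (dcell_ok n x \<and> dcell_ok n y \<and>
     (case x of
        DBul \<Rightarrow> True
      | DMinus i \<Rightarrow> (y = x \<or> (\<exists>j<i. y = DMinus j \<or> y = DPlus j))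
      | DPlus i \<Rightarrow> (y = x \<or> (\<exists>j<i. y = DMinus j \<or> y = DPlus j))))"

definition dmatch :: "nat \<Rightarrow> dcell \<Rightarrow> dcell \<Rightarrow> bool" where
  "dmatch n x y = ((\<exists>i. i \<le> n - 2 \<and> n \<ge> 2 \<and> x = DMinus (i+1) \<and> y = DPlus i)
                  \<or> (x = DBul \<and> y = DPlus (n - 1)))"

definition is_complex :: "nat set \<Rightarrow> nat set set \<Rightarrow> bool" where
  "is_complex V L = ((\<forall>\<sigma>\<in>L. \<sigma> \<subseteq> V) \<and> (\<forall>\<sigma>\<in>L. \<forall>\<tau>. \<tau> \<subseteq> \<sigma> \<longrightarrow> \<tau> \<in> L))"

text \<open>A cell of a product of disks over the ground set V is a map with domain V.\<close>
type_synonym pcell = "nat \<Rightarrow> dcell option"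

definition supp :: "pcell \<Rightarrow> nat set" where
  "supp c = {i. c i = Some DBul}"

definition zk_cell :: "nat \<Rightarrow> nat set \<Rightarrow> nat set set \<Rightarrow> pcell \<Rightarrow> bool" where
  "zk_cell n V L c = (dom c = V \<and> (\<forall>i\<in>V. dcell_ok n (the (c i))) \<and> supp c \<in> L)"

definition pdim :: "nat \<Rightarrow> nat set \<Rightarrow> pcell \<Rightarrow> nat" where
  "pdim n V c = (\<Sum>i\<in>V. ddim n (the (c i)))"

definition gedge :: "nat \<Rightarrow> nat set \<Rightarrow> nat set set \<Rightarrow> pcell \<Rightarrow> pcell \<Rightarrow> bool" where
  "gedge n V L c c' = (zk_cell n V L c \<and> zk_cell n V L c' \<and>
      (\<forall>i\<in>V. dface n (the (c i)) (the (c' i))) \<and> pdim n V c' + 1 = pdim n V c)"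

definition covered :: "(pcell \<times> pcell) set \<Rightarrow> pcell set" where
  "covered E = fst ` E \<union> snd ` E"

text \<open>Mupto n V L j = M_1 \<union> ... \<union> M_j, where the j-th step uses the j-th
  smallest element of V.\<close>
fun Mupto :: "nat \<Rightarrow> nat set \<Rightarrow> nat set set \<Rightarrow> nat \<Rightarrow> (pcell \<times> pcell) set" where
  "Mupto n V L 0 = {}"
| "Mupto n V L (Suc j) = Mupto n V L j \<union>
     {(c, c'). gedge n V L c c' \<and> c \<notin> covered (Mupto n V L j) \<and> c' \<notin> covered (Mupto n V L j)
        \<and> (let v = sorted_list_of_set V ! j in dmatch n (the (c v)) (the (c' v)))}"

definition M_L :: "nat \<Rightarrow> nat set \<Rightarrow> nat set set \<Rightarrow> (pcell \<times> pcell) set" where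
  "M_L n V L = Mupto n V L (card V)"

definition Crit :: "nat \<Rightarrow> nat set \<Rightarrow> nat set set \<Rightarrow> pcell set" where
  "Crit n V L = {c. zk_cell n V L c \<and> c \<notin> covered (M_L n V L)}"

text \<open>c(+): least index with c_i = + (None represents -infinity).\<close>
definition cplus :: "nat \<Rightarrow> pcell \<Rightarrow> nat option" where
  "cplus n c = (if \<exists>i. c i = Some (DPlus (n - 1))
               then Some (LEAST i. c i = Some (DPlus (n - 1))) else None)"

definition full_sub :: "nat set set \<Rightarrow> nat set \<Rightarrow> nat set set" where
  "full_sub K I = {\<sigma>\<in>K. \<sigma> \<subseteq> I}"

end

theory Submission
  imports Defs
begin

text \<open>
  The matching is built coordinate by coordinate, and on a coordinate it only pairs a cell having
  a \<open>\<bullet>\<close> there with the cell obtained by replacing that \<open>\<bullet>\<close> by \<open>+\<close>. For a cell \<open>c\<close> with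
  entries in \<open>{-,+,\<bullet>}\<close> and a single \<open>+\<close> at \<open>p\<close>, the first non-\<open>-\<close> coordinate decides everything:
  if it is a \<open>\<bullet>\<close>, \<open>c\<close> is matched at once. Otherwise, following the coordinates in order, \<open>c\<close>
  survives the step at \<open>p\<close> iff \<open>\<sigma> = {p} \<union> supp c\<close> is a nonface, and then survives the step at a
  later \<open>\<bullet>\<close>-coordinate \<open>i\<close> iff \<open>\<sigma> - {i}\<close> is a face (otherwise its partner with \<open>+\<close> at \<open>i\<close> is
  still unmatched). So \<open>c\<close> is critical iff \<open>p < supp c\<close> and \<open>\<sigma>\<close> is a minimal nonface of \<open>K\<close>, a
  condition that only involves \<open>K\<^sub>\<sigma>\<close> and says exactly that \<open>K\<^sub>\<sigma>\<close> is the boundary of the simplex \<open>\<sigma>\<close>.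
\<close>

definition down_closed :: "'a set set \<Rightarrow> bool" where
  "down_closed L \<longleftrightarrow> (\<forall>\<sigma>\<in>L. \<forall>\<tau>\<subseteq>\<sigma>. \<tau> \<in> L)"

lemma down_closedD: "down_closed L \<Longrightarrow> \<sigma> \<in> L \<Longrightarrow> \<tau> \<subseteq> \<sigma> \<Longrightarrow> \<tau> \<in> L"
  unfolding down_closed_def by blast

lemma down_closed_full_sub: "down_closed K \<Longrightarrow> down_closed (full_sub K I)"
  unfolding down_closed_def full_sub_def by blast

definition minimal_nonface_on :: "'a set set \<Rightarrow> 'a set \<Rightarrow> 'a set \<Rightarrow> bool" where
  "minimal_nonface_on L S \<sigma> \<longleftrightarrow> \<sigma> \<notin> L \<and> (\<forall>i\<in>S. \<sigma> - {i} \<in> L)"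

lemma minimal_nonface_on_insert:
  assumes "down_closed L"
  shows "minimal_nonface_on L (insert q S) \<sigma> \<longleftrightarrow>
           minimal_nonface_on L S \<sigma> \<and> \<not> minimal_nonface_on L S (\<sigma> - {q})"
proof -
  have "(\<forall>i\<in>S. \<sigma> - {q} - {i} \<in> L)" if "\<forall>i\<in>S. \<sigma> - {i} \<in> L"
    using that down_closedD[OF assms] by (metis Diff_subset Diff_insert2 insert_commute)
  then show ?thesis
    unfolding minimal_nonface_on_def by (metis insert_iff)
qed

lemma full_sub_eq_boundary_iff:
  assumes "down_closed K"
  shows "full_sub K \<sigma> = Pow \<sigma> - {\<sigma>} \<longleftrightarrow> minimal_nonface_on K \<sigma> \<sigma>"
proof
  assume "full_sub K \<sigma> = Pow \<sigma> - {\<sigma>}"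
  then show "minimal_nonface_on K \<sigma> \<sigma>"
    unfolding minimal_nonface_on_def full_sub_def by blast
next
  assume mnf: "minimal_nonface_on K \<sigma> \<sigma>"
  have "\<tau> \<in> K" if proper: "\<tau> \<subset> \<sigma>" for \<tau>
  proof -
    obtain i where "i \<in> \<sigma>" "\<tau> \<subseteq> \<sigma> - {i}"
      using proper by blast
    then show ?thesis
      using mnf down_closedD[OF assms] unfolding minimal_nonface_on_def by blast
  qed
  with mnf show "full_sub K \<sigma> = Pow \<sigma> - {\<sigma>}"
    unfolding minimal_nonface_on_def full_sub_def by auto
qed

lemma set_take_strict_sorted:
  fixes xs :: "'a::linorder list"
  assumes "sorted_wrt (<) xs" "j < length xs"
  shows "set (take j xs) = {x \<in> set xs. x < xs ! j}"
proof (intro set_eqI iffI)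
  fix x assume "x \<in> set (take j xs)"
  then obtain k where "k < j" "x = xs ! k"
    by (auto simp: in_set_conv_nth)
  then show "x \<in> {x \<in> set xs. x < xs ! j}"
    using assms sorted_wrt_nth_less by fastforce
next
  fix x assume "x \<in> {x \<in> set xs. x < xs ! j}"
  then obtain k where k: "k < length xs" "x = xs ! k" "xs ! k < xs ! j"
    by (auto simp: in_set_conv_nth)
  then have "k < j"
    using sorted_wrt_nth_less[OF assms(1), of j k] by (cases j k rule: linorder_cases) auto
  then show "x \<in> set (take j xs)"
    using k by (auto simp: in_set_conv_nth)
qed

text \<open>The coordinates treated by the first \<open>j\<close> steps \<open>Mupto n V L j\<close>.\<close>

definition first_elems :: "nat set \<Rightarrow> nat \<Rightarrow> nat set" where
  "first_elems V j = set (take j (sorted_list_of_set V))"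

lemma first_elems_0 [simp]: "first_elems V 0 = {}"
  by (simp add: first_elems_def)

lemma first_elems_card: "finite V \<Longrightarrow> first_elems V (card V) = V"
  by (simp add: first_elems_def)

lemma first_elems_eq:
  assumes "finite V" "j < card V"
  shows "first_elems V j = {i \<in> V. i < sorted_list_of_set V ! j}"
  using set_take_strict_sorted[of "sorted_list_of_set V" j] assms
  by (simp add: first_elems_def)

lemma first_elems_Suc:
  assumes "finite V" "j < card V"
  shows "first_elems V (Suc j) = insert (sorted_list_of_set V ! j) (first_elems V j)"
  using assms by (simp add: first_elems_def take_Suc_conv_app_nth)

lemma sorted_list_of_set_nth_in:
  "finite V \<Longrightarrow> j < card V \<Longrightarrow> sorted_list_of_set V ! j \<in> V"
  by (metis length_sorted_list_of_set nth_mem set_sorted_list_of_set)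

lemma in_sorted_list_of_set_nth:
  assumes "finite V" "a \<in> V"
  obtains j where "j < card V" "sorted_list_of_set V ! j = a"
  using assms by (metis in_set_conv_nth length_sorted_list_of_set set_sorted_list_of_set)

lemma dface_ddim:
  "dface n x y \<Longrightarrow> ddim n y \<le> ddim n x \<and> (ddim n y = ddim n x \<longrightarrow> y = x)"
  unfolding dface_def dcell_ok_def ddim_def by (auto split: dcell.splits)

lemma gedge_eq_fun_upd:
  assumes "finite V" "gedge n V L c c'" "q \<in> V"
    and drop: "ddim n (the (c' q)) + 1 = ddim n (the (c q))"
  shows "c' = c(q := c' q)"
proof -
  txt \<open>Raising the dimension of \<open>c'\<close> at \<open>q\<close> by one gives a pointwise lower bound for the
    dimensions of \<open>c\<close> with the same total, so no other coordinate loses dimension.\<close>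
  define f where "f i = ddim n (the (c' i)) + (if i = q then 1 else 0)" for i
  define g where "g i = ddim n (the (c i))" for i
  have face: "\<forall>i\<in>V. dface n (the (c i)) (the (c' i))"
    and dims: "pdim n V c' + 1 = pdim n V c"
    and doms: "dom c = V" "dom c' = V"
    using assms(2) unfolding gedge_def zk_cell_def by auto
  have le: "\<forall>i\<in>V. f i \<le> g i"
    using face dface_ddim drop by (auto simp: f_def g_def)
  have "sum f V = sum g V"
    using dims assms(1,3) by (simp add: f_def g_def sum.distrib pdim_def)
  then have eq: "\<forall>i\<in>V. f i = g i"
    using sum_strict_mono_ex1[OF assms(1) le] le by (metis le_neq_implies_less less_irrefl)
  have "c' i = c i" if "i \<noteq> q" for i
  proof (rule option.expand)
    show "(c' i = None) = (c i = None)"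
      using doms by blast
    assume "c' i \<noteq> None"
    then have "i \<in> V"
      using doms by blast
    then show "the (c' i) = the (c i)"
      using dface_ddim[OF face[rule_format, OF \<open>i \<in> V\<close>]] eq[rule_format, OF \<open>i \<in> V\<close>] that
      by (simp add: f_def g_def)
  qed
  then show ?thesis
    by (simp add: fun_eq_iff)
qed

lemma supp_subset: "zk_cell n V L c \<Longrightarrow> supp c \<subseteq> V"
  unfolding zk_cell_def supp_def by blast

lemma supp_fun_upd:
  "supp (d(q := Some x)) = (if x = DBul then insert q (supp d) else supp d - {q})"
  unfolding supp_def by auto

lemma zk_cell_fun_upd:
  "zk_cell n V L d \<Longrightarrow> q \<in> V \<Longrightarrow> dcell_ok n x \<Longrightarrow> supp (d(q := Some x)) \<in> L
    \<Longrightarrow> zk_cell n V L (d(q := Some x))"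
  unfolding zk_cell_def by auto

lemma zk_cell_fun_upd_plus:
  assumes "n \<ge> 1" "down_closed L" "zk_cell n V L d" "q \<in> V"
  shows "zk_cell n V L (d(q := Some (DPlus (n - 1))))"
proof (rule zk_cell_fun_upd[OF assms(3,4)])
  show "dcell_ok n (DPlus (n - 1))"
    using assms(1) by (simp add: dcell_ok_def)
  show "supp (d(q := Some (DPlus (n - 1)))) \<in> L"
    using assms(3) down_closedD[OF assms(2)] unfolding supp_fun_upd zk_cell_def by auto
qed

lemma pdim_fun_upd:
  assumes "finite V" "q \<in> V"
  shows "pdim n V (d(q := Some x)) + ddim n (the (d q)) = pdim n V d + ddim n x"
proof -
  have "(\<Sum>i\<in>V - {q}. ddim n (the ((d(q := Some x)) i))) = (\<Sum>i\<in>V - {q}. ddim n (the (d i)))"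
    by (rule sum.cong) auto
  then show ?thesis
    unfolding pdim_def by (simp add: sum.remove[OF assms])
qed

lemma gedge_bullet_plus:
  assumes "finite V" "n \<ge> 1" "down_closed L" "q \<in> V" "zk_cell n V L d" "d q = Some DBul"
  shows "gedge n V L d (d(q := Some (DPlus (n - 1))))"
proof -
  have "zk_cell n V L (d(q := Some (DPlus (n - 1))))"
    using zk_cell_fun_upd_plus[OF assms(2,3,5,4)] .
  moreover have "\<forall>i\<in>V. dface n (the (d i)) (the ((d(q := Some (DPlus (n - 1)))) i))"
    using assms(2,5,6) unfolding zk_cell_def
    by (auto simp: dface_def dcell_ok_def split: dcell.splits)
  moreover have "pdim n V (d(q := Some (DPlus (n - 1)))) + 1 = pdim n V d"
    using pdim_fun_upd[OF assms(1,4), of n d "DPlus (n - 1)"] assms(2,6) by (simp add: ddim_def)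
  ultimately show ?thesis
    using assms(5) unfolding gedge_def by blast
qed

lemma in_covered_iff: "d \<in> covered E \<longleftrightarrow> (\<exists>c'. (d, c') \<in> E) \<or> (\<exists>c. (c, d) \<in> E)"
  unfolding covered_def by force

lemma covered_Un: "covered (E \<union> F) = covered E \<union> covered F"
  unfolding covered_def by blast

lemma dmatch_basic:
  assumes "dmatch n x y"
    and "x \<in> {DMinus 0, DPlus (n - 1), DBul} \<or> y \<in> {DMinus 0, DPlus (n - 1), DBul}"
  shows "x = DBul \<and> y = DPlus (n - 1)"
  using assms unfolding dmatch_def by auto

lemma matched_gedge_iff:
  assumes "finite V" "n \<ge> 1" "down_closed L" "q \<in> V"
    and basic: "c q \<in> {Some (DMinus 0), Some (DPlus (n - 1)), Some DBul}
              \<or> c' q \<in> {Some (DMinus 0), Some (DPlus (n - 1)), Some DBul}"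
  shows "gedge n V L c c' \<and> dmatch n (the (c q)) (the (c' q)) \<longleftrightarrow>
         zk_cell n V L c \<and> c q = Some DBul \<and> c' = c(q := Some (DPlus (n - 1)))"
proof
  assume edge: "gedge n V L c c' \<and> dmatch n (the (c q)) (the (c' q))"
  have "q \<in> dom c" "q \<in> dom c'"
    using edge assms(4) unfolding gedge_def zk_cell_def by auto
  then have cells: "c q = Some DBul" "c' q = Some (DPlus (n - 1))"
    using dmatch_basic[of n "the (c q)" "the (c' q)"] edge basic by auto
  then have "c' = c(q := c' q)"
    using gedge_eq_fun_upd[OF assms(1) conjunct1[OF edge] assms(4)] assms(2)
    by (simp add: ddim_def)
  then show "zk_cell n V L c \<and> c q = Some DBul \<and> c' = c(q := Some (DPlus (n - 1)))"
    using edge cells unfolding gedge_def by simp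
next
  assume "zk_cell n V L c \<and> c q = Some DBul \<and> c' = c(q := Some (DPlus (n - 1)))"
  then show "gedge n V L c c' \<and> dmatch n (the (c q)) (the (c' q))"
    using gedge_bullet_plus[OF assms(1-4)] by (simp add: dmatch_def)
qed

lemma covered_Mupto_Suc_iff:
  assumes "finite V" "n \<ge> 1" "down_closed L" "j < card V" "q = sorted_list_of_set V ! j"
    and cell: "zk_cell n V L d"
    and basic: "d q \<in> {Some (DMinus 0), Some (DPlus (n - 1)), Some DBul}"
  shows "d \<in> covered (Mupto n V L (Suc j)) \<longleftrightarrow> d \<in> covered (Mupto n V L j)
     \<or> d q = Some DBul \<and> d \<notin> covered (Mupto n V L j)
         \<and> d(q := Some (DPlus (n - 1))) \<notin> covered (Mupto n V L j)
     \<or> d q = Some (DPlus (n - 1)) \<and> insert q (supp d) \<in> L \<and> d \<notin> covered (Mupto n V L j)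
         \<and> d(q := Some DBul) \<notin> covered (Mupto n V L j)"
proof -
  let ?M = "Mupto n V L j"
  define New where "New = {(c, c'). gedge n V L c c' \<and> c \<notin> covered ?M \<and> c' \<notin> covered ?M
      \<and> dmatch n (the (c q)) (the (c' q))}"
  have "q \<in> V"
    using sorted_list_of_set_nth_in assms(1,4,5) by simp
  note matched = matched_gedge_iff[OF assms(1-3) this]
  have Mupto_Suc: "Mupto n V L (Suc j) = ?M \<union> New"
    unfolding New_def assms(5) by (simp add: Let_def)
  have New_iff: "(c, c') \<in> New \<longleftrightarrow> (zk_cell n V L c \<and> c q = Some DBul \<and> c' = c(q := Some (DPlus (n - 1))))
      \<and> c \<notin> covered ?M \<and> c' \<notin> covered ?M"
    if "c q \<in> {Some (DMinus 0), Some (DPlus (n - 1)), Some DBul}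
      \<or> c' q \<in> {Some (DMinus 0), Some (DPlus (n - 1)), Some DBul}" for c c'
    using matched[of c c', OF that] unfolding New_def by auto
  have upper: "(\<exists>c'. (d, c') \<in> New) \<longleftrightarrow> d q = Some DBul \<and> d \<notin> covered ?M
      \<and> d(q := Some (DPlus (n - 1))) \<notin> covered ?M"
    unfolding New_iff[of d, OF disjI1[OF basic]] using cell by blast
  have lower_cell: "zk_cell n V L c0 \<and> c0 q = Some DBul \<and> d = c0(q := Some (DPlus (n - 1))) \<longleftrightarrow>
        c0 = d(q := Some DBul) \<and> d q = Some (DPlus (n - 1)) \<and> insert q (supp d) \<in> L" for c0
  proof
    assume c0: "zk_cell n V L c0 \<and> c0 q = Some DBul \<and> d = c0(q := Some (DPlus (n - 1)))"
    then have "c0 = d(q := Some DBul)"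
      by (simp add: fun_eq_iff)
    moreover have "supp c0 \<in> L" "q \<in> supp c0"
      using c0 unfolding zk_cell_def supp_def by auto
    ultimately show "c0 = d(q := Some DBul) \<and> d q = Some (DPlus (n - 1)) \<and> insert q (supp d) \<in> L"
      using c0 by (simp add: supp_fun_upd insert_absorb)
  next
    assume c0: "c0 = d(q := Some DBul) \<and> d q = Some (DPlus (n - 1)) \<and> insert q (supp d) \<in> L"
    then show "zk_cell n V L c0 \<and> c0 q = Some DBul \<and> d = c0(q := Some (DPlus (n - 1)))"
      using zk_cell_fun_upd[OF cell \<open>q \<in> V\<close>] by (auto simp: supp_fun_upd dcell_ok_def)
  qed
  have lower: "(\<exists>c0. (c0, d) \<in> New) \<longleftrightarrow> d q = Some (DPlus (n - 1)) \<and> insert q (supp d) \<in> L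
      \<and> d \<notin> covered ?M \<and> d(q := Some DBul) \<notin> covered ?M"
    unfolding New_iff[of _ d, OF disjI2[OF basic]] lower_cell by blast
  show ?thesis
    unfolding Mupto_Suc covered_Un Un_iff in_covered_iff[of d New] upper lower by blast
qed

lemma uncovered_if_minus_prefix:
  assumes "finite V" "n \<ge> 1" "down_closed L" "zk_cell n V L d"
  shows "j \<le> card V \<Longrightarrow> \<forall>i\<in>first_elems V j. d i = Some (DMinus 0)
    \<Longrightarrow> d \<notin> covered (Mupto n V L j)"
proof (induction j)
  case 0
  then show ?case
    by (simp add: covered_def)
next
  case (Suc j)
  define q where "q = sorted_list_of_set V ! j"
  have "j < card V"
    using Suc.prems(1) by simp
  then have "d q = Some (DMinus 0)" "\<forall>i\<in>first_elems V j. d i = Some (DMinus 0)"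
    using Suc.prems(2) first_elems_Suc[OF assms(1)] q_def by auto
  then show ?case
    using covered_Mupto_Suc_iff[OF assms(1-3) \<open>j < card V\<close> q_def assms(4)] Suc.IH \<open>j < card V\<close>
    by simp
qed

lemma uncovered_Suc_iff_plus_after_minus:
  assumes "finite V" "n \<ge> 1" "down_closed L" "j < card V" "q = sorted_list_of_set V ! j"
    and cell: "zk_cell n V L d" and plus: "d q = Some (DPlus (n - 1))"
    and minus: "\<forall>i\<in>first_elems V j. d i = Some (DMinus 0)"
  shows "d \<notin> covered (Mupto n V L (Suc j)) \<longleftrightarrow> insert q (supp d) \<notin> L"
proof -
  have "q \<in> V" "q \<notin> first_elems V j"
    using sorted_list_of_set_nth_in first_elems_eq assms(1,4,5) by auto
  note uncovered = uncovered_if_minus_prefix[OF assms(1-3) _ less_imp_le[OF assms(4)]]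
  have "d \<notin> covered (Mupto n V L j)"
    using uncovered[OF cell minus] .
  moreover have "d(q := Some DBul) \<notin> covered (Mupto n V L j)" if "insert q (supp d) \<in> L"
  proof (rule uncovered)
    show "zk_cell n V L (d(q := Some DBul))"
      using zk_cell_fun_upd[OF cell \<open>q \<in> V\<close>] that by (simp add: supp_fun_upd dcell_ok_def)
    show "\<forall>i\<in>first_elems V j. (d(q := Some DBul)) i = Some (DMinus 0)"
      using minus \<open>q \<notin> first_elems V j\<close> by auto
  qed
  ultimately show ?thesis
    using covered_Mupto_Suc_iff[OF assms(1-5) cell] plus by auto
qed

definition leading_plus :: "nat \<Rightarrow> nat set \<Rightarrow> pcell \<Rightarrow> nat \<Rightarrow> bool" where
  "leading_plus n P d p \<longleftrightarrow> p \<in> P \<and> d p = Some (DPlus (n - 1)) \<and>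
     (\<forall>i\<in>P - {p}. d i = Some (DMinus 0) \<or> d i = Some DBul \<and> p < i)"

lemma leading_plus_insert_plus:
  assumes "leading_plus n (insert q P) d p" "d q = Some (DPlus (n - 1))" "\<forall>i\<in>P. i < q"
  shows "p = q" "\<forall>i\<in>P. d i = Some (DMinus 0)"
proof -
  show "p = q"
  proof (rule ccontr)
    assume "p \<noteq> q"
    then have "d q = Some (DMinus 0) \<or> d q = Some DBul"
      using assms(1) unfolding leading_plus_def by blast
    then show False
      using assms(2) by simp
  qed
  then show "\<forall>i\<in>P. d i = Some (DMinus 0)"
    using assms(1,3) unfolding leading_plus_def by fastforce
qed

lemma leading_plus_insert_not_plus:
  assumes "leading_plus n (insert q P) d p" "d q \<noteq> Some (DPlus (n - 1))"
  shows "p \<noteq> q" "leading_plus n P d p"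
  using assms unfolding leading_plus_def by auto

lemma uncovered_iff_leading_plus:
  assumes "finite V" "n \<ge> 1" "down_closed L"
  shows "j \<le> card V \<Longrightarrow> zk_cell n V L d
    \<Longrightarrow> \<forall>i\<in>V. d i \<in> {Some (DMinus 0), Some (DPlus (n - 1)), Some DBul}
    \<Longrightarrow> leading_plus n (first_elems V j) d p
    \<Longrightarrow> d \<notin> covered (Mupto n V L j) \<longleftrightarrow>
        minimal_nonface_on L (first_elems V j \<inter> supp d) (insert p (supp d))"
proof (induction j arbitrary: d)
  case 0
  then show ?case
    by (simp add: leading_plus_def)
next
  case (Suc j)
  define q where "q = sorted_list_of_set V ! j"
  define P where "P = first_elems V j"
  have j: "j < card V" "j \<le> card V"
    using Suc.prems(1) by simp_all
  have P_Suc: "first_elems V (Suc j) = insert q P" and below_q: "\<forall>i\<in>P. i < q" and "q \<in> V"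
    using first_elems_Suc first_elems_eq sorted_list_of_set_nth_in assms(1) j q_def P_def by auto
  note step = covered_Mupto_Suc_iff[OF assms j(1) q_def Suc.prems(2)]
  have lead: "leading_plus n (insert q P) d p"
    using Suc.prems(4) P_Suc by simp
  consider (minus) "d q = Some (DMinus 0)" | (plus) "d q = Some (DPlus (n - 1))" | (bullet) "d q = Some DBul"
    using Suc.prems(3) \<open>q \<in> V\<close> by blast
  then show ?case
  proof cases
    case minus
    then have "leading_plus n P d p"
      using leading_plus_insert_not_plus[OF lead] by simp
    moreover have "insert q P \<inter> supp d = P \<inter> supp d"
      using minus by (auto simp: supp_def)
    ultimately show ?thesis
      using step minus Suc.IH[OF j(2) Suc.prems(2,3)] P_Suc unfolding P_def by simp
  next
    case plus
    note p = leading_plus_insert_plus[OF lead plus below_q]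
    then have "insert q P \<inter> supp d = {}"
      using plus by (auto simp: supp_def)
    then show ?thesis
      using uncovered_Suc_iff_plus_after_minus[OF assms j(1) q_def Suc.prems(2) plus] p P_Suc P_def
      by (simp add: minimal_nonface_on_def)
  next
    case bullet
    define e where "e = d(q := Some (DPlus (n - 1)))"
    have "p \<noteq> q" "leading_plus n P d p"
      using leading_plus_insert_not_plus[OF lead] bullet by simp_all
    have "q \<notin> P"
      using below_q by blast
    have supp_e: "supp e = supp d - {q}"
      unfolding e_def supp_fun_upd by simp
    have cell_e: "zk_cell n V L e"
      unfolding e_def using zk_cell_fun_upd_plus[OF assms(2,3) Suc.prems(2) \<open>q \<in> V\<close>] .
    have basic_e: "\<forall>i\<in>V. e i \<in> {Some (DMinus 0), Some (DPlus (n - 1)), Some DBul}"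
      using Suc.prems(3) unfolding e_def by simp
    have "leading_plus n P e p"
      using \<open>leading_plus n P d p\<close> \<open>p \<noteq> q\<close> \<open>q \<notin> P\<close> unfolding leading_plus_def e_def by auto
    moreover have "P \<inter> supp e = P \<inter> supp d" "insert p (supp e) = insert p (supp d) - {q}"
      using supp_e \<open>p \<noteq> q\<close> \<open>q \<notin> P\<close> by auto
    ultimately have
      "d \<notin> covered (Mupto n V L j) \<longleftrightarrow> minimal_nonface_on L (P \<inter> supp d) (insert p (supp d))"
      "e \<notin> covered (Mupto n V L j) \<longleftrightarrow> minimal_nonface_on L (P \<inter> supp d) (insert p (supp d) - {q})"
      using Suc.IH[OF j(2) Suc.prems(2,3)] Suc.IH[OF j(2) cell_e basic_e] \<open>leading_plus n P d p\<close>
      unfolding P_def by simp_all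
    moreover have "insert q P \<inter> supp d = insert q (P \<inter> supp d)"
      using bullet by (auto simp: supp_def)
    moreover have "d \<notin> covered (Mupto n V L (Suc j)) \<longleftrightarrow>
        d \<notin> covered (Mupto n V L j) \<and> e \<in> covered (Mupto n V L j)"
      using step bullet unfolding e_def by (auto simp del: Mupto.simps)
    ultimately show ?thesis
      using minimal_nonface_on_insert[OF assms(3)] P_Suc by (auto simp del: Mupto.simps)
  qed
qed

lemma covered_mono: "E \<subseteq> F \<Longrightarrow> covered E \<subseteq> covered F"
  unfolding covered_def by blast

lemma Mupto_mono: "k \<le> l \<Longrightarrow> Mupto n V L k \<subseteq> Mupto n V L l"
  by (rule lift_Suc_mono_le[of "Mupto n V L"]) auto

lemma covered_if_leading_bullet:
  assumes "finite V" "n \<ge> 1" "down_closed L" and cell: "zk_cell n V L c"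
    and bullet: "c a = Some DBul" and minus: "\<forall>i\<in>V. i < a \<longrightarrow> c i = Some (DMinus 0)"
  shows "c \<in> covered (M_L n V L)"
proof -
  have "a \<in> V"
    using cell bullet unfolding zk_cell_def by blast
  then obtain j where j: "j < card V" "sorted_list_of_set V ! j = a"
    using in_sorted_list_of_set_nth assms(1) by blast
  then have prefix: "first_elems V j = {i \<in> V. i < a}"
    using first_elems_eq assms(1) by simp
  have "zk_cell n V L (c(a := Some (DPlus (n - 1))))"
    using zk_cell_fun_upd_plus[OF assms(2,3) cell \<open>a \<in> V\<close>] .
  then have "c \<notin> covered (Mupto n V L j)" "c(a := Some (DPlus (n - 1))) \<notin> covered (Mupto n V L j)"
    using uncovered_if_minus_prefix[OF assms(1-3) _ less_imp_le[OF j(1)]] cell minus prefix by auto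
  then have "c \<in> covered (Mupto n V L (Suc j))"
    using covered_Mupto_Suc_iff[OF assms(1-3) j(1) j(2)[symmetric] cell] bullet
    by (simp del: Mupto.simps)
  then show ?thesis
    unfolding M_L_def using covered_mono[OF Mupto_mono[of "Suc j" "card V"]] j(1) by auto
qed

lemma Crit_iff_leading_plus:
  assumes "finite V" "n \<ge> 1" "down_closed L" and cell: "zk_cell n V L c"
    and basic: "\<forall>i\<in>V. c i \<in> {Some (DMinus 0), Some (DPlus (n - 1)), Some DBul}"
    and plus: "c p = Some (DPlus (n - 1))"
    and unique: "\<forall>i\<in>V. c i = Some (DPlus (n - 1)) \<longrightarrow> i = p"
  shows "c \<in> Crit n V L \<longleftrightarrow>
           (\<forall>i\<in>supp c. p < i) \<and> minimal_nonface_on L (supp c) (insert p (supp c))"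
proof (cases "\<forall>i\<in>supp c. p < i")
  case True
  have "p \<in> V"
    using cell plus unfolding zk_cell_def by blast
  have "leading_plus n V c p"
    unfolding leading_plus_def
  proof (intro conjI ballI)
    fix i assume "i \<in> V - {p}"
    then show "c i = Some (DMinus 0) \<or> c i = Some DBul \<and> p < i"
      using basic unique True unfolding supp_def by blast
  qed (use plus \<open>p \<in> V\<close> in auto)
  moreover have "supp c \<subseteq> V"
    using supp_subset[OF cell] .
  ultimately show ?thesis
    using uncovered_iff_leading_plus[OF assms(1-3) order_refl cell basic] True
    unfolding Crit_def M_L_def first_elems_card[OF assms(1)] by (simp add: Int_absorb1 cell)
next
  case False
  then obtain b where b: "b \<in> supp c" "b \<le> p"
    by (auto simp: not_less)
  define a where "a = Min (supp c)"
  have "finite (supp c)"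
    using supp_subset[OF cell] assms(1) by (rule finite_subset)
  then have "a \<in> supp c" "a \<le> b"
    using b unfolding a_def by (auto intro: Min_in)
  moreover have "p \<notin> supp c"
    using plus unfolding supp_def by simp
  ultimately have "a < p"
    using b by (metis le_neq_implies_less order_trans)
  have "c i = Some (DMinus 0)" if "i \<in> V" "i < a" for i
  proof -
    have "i \<notin> supp c"
      using that \<open>finite (supp c)\<close> unfolding a_def by (meson Min_le not_le)
    moreover have "c i \<noteq> Some (DPlus (n - 1))"
      using unique that \<open>a < p\<close> by auto
    ultimately show ?thesis
      using basic that unfolding supp_def by blast
  qed
  then have "c \<in> covered (M_L n V L)"
    using covered_if_leading_bullet[OF assms(1-3) cell] \<open>a \<in> supp c\<close> unfolding supp_def by blast
  then show ?thesis
    using False unfolding Crit_def by blast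
qed

lemma cplus_SomeD: "cplus n c = Some p \<Longrightarrow> c p = Some (DPlus (n - 1))"
  unfolding cplus_def by (auto split: if_splits intro: LeastI_ex)

lemma supp_restrict_map: "supp c \<subseteq> I \<Longrightarrow> supp (c |` I) = supp c"
  unfolding supp_def restrict_map_def by auto

lemma zk_cell_restrict_map:
  assumes "zk_cell n V K c" "supp c \<subseteq> I" "I \<subseteq> V"
  shows "zk_cell n I (full_sub K I) (c |` I)"
  using assms supp_restrict_map[OF assms(2)]
  unfolding zk_cell_def full_sub_def by (auto simp: Int_absorb1)

lemma Crit_restrict_map_iff:
  assumes "finite V" "n \<ge> 1" "down_closed K" and cell: "zk_cell n V K c"
    and basic: "\<forall>i\<in>V. c i \<in> {Some (DMinus 0), Some (DPlus (n - 1)), Some DBul}"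
    and plus: "c p = Some (DPlus (n - 1))"
    and unique: "\<forall>i\<in>V. c i = Some (DPlus (n - 1)) \<longrightarrow> i = p"
  defines "I \<equiv> insert p (supp c)"
  shows "c |` I \<in> Crit n I (full_sub K I) \<longleftrightarrow> c \<in> Crit n V K"
proof -
  have "I \<subseteq> V"
    using supp_subset[OF cell] cell plus unfolding I_def zk_cell_def by blast
  then have "finite I"
    using assms(1) by (rule finite_subset)
  moreover have "zk_cell n I (full_sub K I) (c |` I)"
    using zk_cell_restrict_map[OF cell _ \<open>I \<subseteq> V\<close>] unfolding I_def by blast
  moreover have "\<forall>i\<in>I. (c |` I) i \<in> {Some (DMinus 0), Some (DPlus (n - 1)), Some DBul}"
    using basic \<open>I \<subseteq> V\<close> by auto
  moreover have "(c |` I) p = Some (DPlus (n - 1))"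
    using plus unfolding I_def by simp
  moreover have "\<forall>i\<in>I. (c |` I) i = Some (DPlus (n - 1)) \<longrightarrow> i = p"
    using unique \<open>I \<subseteq> V\<close> by auto
  ultimately have "c |` I \<in> Crit n I (full_sub K I) \<longleftrightarrow> (\<forall>i\<in>supp (c |` I). p < i)
      \<and> minimal_nonface_on (full_sub K I) (supp (c |` I)) (insert p (supp (c |` I)))"
    by (rule Crit_iff_leading_plus[OF _ assms(2) down_closed_full_sub[OF assms(3)]])
  moreover have "supp (c |` I) = supp c"
    using supp_restrict_map[of c I] unfolding I_def by blast
  moreover have "minimal_nonface_on (full_sub K I) (supp c) I \<longleftrightarrow> minimal_nonface_on K (supp c) I"
    unfolding minimal_nonface_on_def full_sub_def I_def by blast
  ultimately show ?thesis
    using Crit_iff_leading_plus[OF assms(1-3) cell basic plus unique] unfolding I_def by simp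
qed

lemma full_sub_eq_boundary_if_Crit:
  assumes "finite V" "n \<ge> 1" "down_closed K" and cell: "zk_cell n V K c"
    and basic: "\<forall>i\<in>V. c i \<in> {Some (DMinus 0), Some (DPlus (n - 1)), Some DBul}"
    and plus: "c p = Some (DPlus (n - 1))"
    and unique: "\<forall>i\<in>V. c i = Some (DPlus (n - 1)) \<longrightarrow> i = p"
    and crit: "c \<in> Crit n V K"
  shows "full_sub K (insert p (supp c)) = Pow (insert p (supp c)) - {insert p (supp c)}"
proof -
  have "minimal_nonface_on K (supp c) (insert p (supp c))"
    using Crit_iff_leading_plus[OF assms(1-3) cell basic plus unique] crit by blast
  moreover have "insert p (supp c) - {p} = supp c" "supp c \<in> K"
    using plus cell by (auto simp: supp_def zk_cell_def)
  ultimately have "minimal_nonface_on K (insert p (supp c)) (insert p (supp c))"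
    unfolding minimal_nonface_on_def by auto
  then show ?thesis
    using full_sub_eq_boundary_iff[OF assms(3)] by simp
qed

theorem lemma3p7:
  fixes n m :: nat and K :: "nat set set" and c :: pcell and I :: "nat set"
  assumes "n \<ge> 1"
    and "is_complex {1..m} K"
    and "zk_cell n {1..m} K c"
    and "\<forall>i\<in>{1..m}. c i \<in> {Some (DMinus 0), Some (DPlus (n - 1)), Some DBul}"
    and "cplus n c \<noteq> None"
    and "\<forall>i\<in>{1..m}. c i = Some (DPlus (n - 1)) \<longleftrightarrow> cplus n c = Some i"
    and "I = insert (the (cplus n c)) (supp c)"
  shows "c \<in> Crit n {1..m} K \<longleftrightarrow>
           (c |` I \<in> Crit n I (full_sub K I) \<and> full_sub K I = Pow I - {I})"
proof -
  obtain p where p: "cplus n c = Some p"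
    using assms(5) by blast
  then have plus: "c p = Some (DPlus (n - 1))"
    by (rule cplus_SomeD)
  have unique: "\<forall>i\<in>{1..m}. c i = Some (DPlus (n - 1)) \<longrightarrow> i = p"
    using assms(6) p by simp
  have "down_closed K"
    using assms(2) unfolding is_complex_def down_closed_def by blast
  note hyps = finite_atLeastAtMost assms(1) this assms(3,4) plus unique
  show ?thesis
    using Crit_restrict_map_iff[OF hyps] full_sub_eq_boundary_if_Crit[OF hyps] assms(7) p by auto
qed

end
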